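(* Let $\mathcal{C}=\langle C_\delta:\delta\in\mathrm{Lim}\rangle$ be a $\clubsuit$-sequence, let $n\geq1$, and let $\mathcal{F}$ be a construction scheme over $\omega_1$ of a good type which satisfies $IH_\rho(\mathcal{C},n)$. Then $\mathcal{F}$ is $(n+1)$-$\rho$-capturing.
   Context: $\mathrm{Lim}$ is the set of nonzero countable limit ordinals. A $\clubsuit$-sequence is $\langle C_\delta:\delta\in\mathrm{Lim}\rangle$ with $C_\delta\subseteq\delta$ of order type $\omega$, $\sup C_\delta=\delta$, and $\{\delta:C_\delta\subseteq S\}$ stationary for every uncountable $S\subseteq\omega_1$. $\mathrm{Lim}_0=\mathrm{Lim}$, $\mathrm{Lim}_{n+1}=\{\delta\in\mathrm{Lim}:C_\delta\subseteq\mathrm{Lim}_n\}$; $C^0_\delta=C_\delta$, $C^{n+1}_\delta=\bigcup_{\xi\in C_\delta}C^n_\xi$ for $\delta\in\mathrm{Lim}_{n+1}$. A type is a sequence $\langle m_k,n_{k+1},r_{k+1}\rangle_{k\in\omega}$ of natural numbers with $m_0=1$ and, for all $k$, $n_{k+1}\geq2$, $m_k>r_{k+1}$, $m_{k+1}=r_{k+1}+(m_k-r_{k+1})n_{k+1}$; good if every $r$ equals $r_k$ for infinitely many $k\geq1$. $A<B$ means every element of $A$ is below every element of $B$; $D(a)$ is the $a$-th element of a finite set of ordinals $D$. A construction scheme of type $\tau$ over a set of ordinals $Y$ is a family $\mathcal{F}$ of nonempty finite subsets of $Y$, cofinal among finite subsets of $Y$ under $\subseteq$, each of size $m_k$ for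 some $k$, with $\mathcal{F}_k=\{F\in\mathcal{F}:|F|=m_k\}$ satisfying: (i) for $E,F\in\mathcal{F}_k$, $E\cap F$ is an initial segment of both; (ii) every $F\in\mathcal{F}_{k+1}$ equals $F_0\cup\dots\cup F_{n_{k+1}-1}$ with $F_i\in\mathcal{F}_k$ a $\Delta$-system with root $R(F)$, $|R(F)|=r_{k+1}$, $R(F)<F_0\setminus R(F)<\dots<F_{n_{k+1}-1}\setminus R(F)$ (the canonical pieces). $\rho(\alpha,\beta)=\min\{k:\exists F\in\mathcal{F}_k\ \{\alpha,\beta\}\subseteq F\}$; $(\alpha)_k=\{\xi\leq\alpha:\rho(\xi,\alpha)\leq k\}$; for $k\geq1$, $\Xi_\alpha(k)=-1$ if $\alpha\in R(F)$ and $=i$ if $\alpha\in F_i\setminus R(F)$, for any $F\in\mathcal{F}_k$ containing $\alpha$. A root-tail-tail $\Delta$-system is a family (or sequence $\langle D_i\rangle_{i<n}$), $n\geq2$, of finite sets of ordinals of common size $m$ with pairwise intersections equal to a root $R$, $R<D_i\setminus R$, and $D_0\setminus R<\dots<D_{n-1}\setminus R$; $r=|R|$. It is $\rho$-captured at level $l\geq1$ if $n\leq n_l$, (I) $\Xi_{D_i(a)}(l)=-1$ for $a<r$ and $=i$ for $a\geq r$ ($i<n$, $a<m$), and (II) $\rho(D_i(a),D_j(a))=l$ for $i<j<n$, $r\leq a<m$. A scheme over $\omega_1$ is $n$-$\rho$-capturing if for every uncountable family $\mathcal{S}$ of nonempty finite subsets of $\omega_1$ there are infinitely many $l$ for which some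 $n$ distinct members of $\mathcal{S}$, suitably enumerated, form a root-tail-tail $\Delta$-system $\rho$-captured at level $l$. A tuple $(n,\delta,k,A)$ is $\mathcal{F}$-good if $n,k\in\omega$, $\delta\in\mathrm{Lim}_n$, the family $\{(\xi)_k:\xi\in C^n_\delta\}$ is a root-tail-tail $\Delta$-system with some root $R^n_k(\delta)$, and $A$ is a nonempty finite subset of $[\delta,\omega_1)$. $\mathcal{F}$ satisfies $IH_\rho(\mathcal{C},n)$ if for every $\mathcal{F}$-good tuple $(n,\delta,k,A)$ there are infinitely many $l\geq k$ with $n_l>n$ for which there exist $F\in\mathcal{F}_l$ (with canonical pieces $F_0,\dots,F_{n_l-1}$ and root $R(F)$) and an $n$-element set $D\subseteq C^n_\delta$ (with $D(i)$ its $i$-th element) such that $A\subseteq F_n\setminus R(F)$ and, for each $i<n$, $(D(i))_k\subseteq F_i$ and $(D(i))_k\cap R(F)=R^n_k(\delta)$. *)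

theory Defs
  imports Main "HOL-Library.Countable_Set"
begin

text \<open>The ambient type 'a (a wellorder) plays the role of omega_1: it is
uncountable and all proper initial segments are countable.\<close>

definition omega1_like :: "'a::wellorder itself \<Rightarrow> bool" where
  "omega1_like _ \<longleftrightarrow> uncountable (UNIV :: 'a set) \<and> (\<forall>x::'a. countable {..<x})"

definition Lim :: "'a::wellorder set" where
  "Lim = {\<delta>. (\<exists>\<alpha>. \<alpha> < \<delta>) \<and> (\<forall>\<alpha><\<delta>. \<exists>\<beta>. \<alpha> < \<beta> \<and> \<beta> < \<delta>)}"

definition club :: "'a::wellorder set \<Rightarrow> bool" where
  "club C \<longleftrightarrow> (\<forall>\<alpha>. \<exists>c\<in>C. \<alpha> < c) \<and>
     (\<forall>\<delta>\<in>Lim. (\<forall>\<alpha><\<delta>. \<exists>c\<in>C. \<alpha> < c \<and> c < \<delta>) \<longrightarrow> \<delta> \<in> C)"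

definition stationary :: "'a::wellorder set \<Rightarrow> bool" where
  "stationary S \<longleftrightarrow> (\<forall>C. club C \<longrightarrow> S \<inter> C \<noteq> {})"

text \<open>C is a clubsuit-sequence (its values outside Lim are irrelevant).\<close>
definition clubsuit_seq :: "('a::wellorder \<Rightarrow> 'a set) \<Rightarrow> bool" where
  "clubsuit_seq C \<longleftrightarrow>
     (\<forall>\<delta>\<in>Lim. C \<delta> \<subseteq> {..<\<delta>} \<and> infinite (C \<delta>) \<and> (\<forall>x\<in>C \<delta>. finite {y\<in>C \<delta>. y < x})
              \<and> (\<forall>\<alpha><\<delta>. \<exists>c\<in>C \<delta>. \<alpha> < c)) \<and>
     (\<forall>S. uncountable S \<longrightarrow> stationary {\<delta>\<in>Lim. C \<delta> \<subseteq> S})"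

fun LimN :: "('a::wellorder \<Rightarrow> 'a set) \<Rightarrow> nat \<Rightarrow> 'a set" where
  "LimN C 0 = Lim"
| "LimN C (Suc n) = {\<delta>\<in>Lim. C \<delta> \<subseteq> LimN C n}"

fun CN :: "('a::wellorder \<Rightarrow> 'a set) \<Rightarrow> nat \<Rightarrow> 'a \<Rightarrow> 'a set" where
  "CN C 0 \<delta> = C \<delta>"
| "CN C (Suc n) \<delta> = (\<Union>\<xi>\<in>C \<delta>. CN C n \<xi>)"

text \<open>Types: m k, nn (k+1), r (k+1); the values nn 0, r 0 are irrelevant.\<close>
definition is_type :: "(nat \<Rightarrow> nat) \<Rightarrow> (nat \<Rightarrow> nat) \<Rightarrow> (nat \<Rightarrow> nat) \<Rightarrow> bool" where
  "is_type m nn r \<longleftrightarrow> m 0 = 1 \<and>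
     (\<forall>k. nn (Suc k) \<ge> 2 \<and> m k > r (Suc k) \<and> m (Suc k) = r (Suc k) + (m k - r (Suc k)) * nn (Suc k))"

definition good_type :: "(nat \<Rightarrow> nat) \<Rightarrow> (nat \<Rightarrow> nat) \<Rightarrow> (nat \<Rightarrow> nat) \<Rightarrow> bool" where
  "good_type m nn r \<longleftrightarrow> is_type m nn r \<and> (\<forall>x. infinite {k. k \<ge> 1 \<and> r k = x})"

definition set_less :: "'a::linorder set \<Rightarrow> 'a set \<Rightarrow> bool" where
  "set_less A B \<longleftrightarrow> (\<forall>a\<in>A. \<forall>b\<in>B. a < b)"

definition init_seg :: "'a::linorder set \<Rightarrow> 'a set \<Rightarrow> bool" where
  "init_seg X Y \<longleftrightarrow> X \<subseteq> Y \<and> (\<forall>x\<in>X. \<forall>y\<in>Y. y < x \<longrightarrow> y \<in> X)"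

text \<open>D(a): the a-th element (counting from 0) of a finite set D.\<close>
definition elem :: "'a::linorder set \<Rightarrow> nat \<Rightarrow> 'a" where
  "elem D a = sorted_list_of_set D ! a"

definition level :: "'a set set \<Rightarrow> (nat \<Rightarrow> nat) \<Rightarrow> nat \<Rightarrow> 'a set set" where
  "level F m k = {G\<in>F. card G = m k}"

definition canon_pieces ::
  "'a::linorder set set \<Rightarrow> (nat \<Rightarrow> nat) \<Rightarrow> (nat \<Rightarrow> nat) \<Rightarrow> (nat \<Rightarrow> nat)
     \<Rightarrow> nat \<Rightarrow> 'a set \<Rightarrow> 'a set \<Rightarrow> (nat \<Rightarrow> 'a set) \<Rightarrow> bool" where
  "canon_pieces F m nn r l G R Gs \<longleftrightarrow> (\<exists>k. l = Suc k \<and>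
     G \<in> level F m l \<and>
     (\<forall>i<nn l. Gs i \<in> level F m k) \<and>
     G = (\<Union>i<nn l. Gs i) \<and>
     (\<forall>i<nn l. \<forall>j<nn l. i \<noteq> j \<longrightarrow> Gs i \<inter> Gs j = R) \<and>
     card R = r l \<and>
     set_less R (Gs 0 - R) \<and>
     (\<forall>i. Suc i < nn l \<longrightarrow> set_less (Gs i - R) (Gs (Suc i) - R)))"

definition construction_scheme ::
  "'a::linorder set set \<Rightarrow> (nat \<Rightarrow> nat) \<Rightarrow> (nat \<Rightarrow> nat) \<Rightarrow> (nat \<Rightarrow> nat) \<Rightarrow> bool" where
  "construction_scheme F m nn r \<longleftrightarrow> is_type m nn r \<and>
     (\<forall>G\<in>F. finite G \<and> G \<noteq> {} \<and> (\<exists>k. card G = m k)) \<and>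
     (\<forall>A. finite A \<longrightarrow> (\<exists>G\<in>F. A \<subseteq> G)) \<and>
     (\<forall>k. \<forall>E\<in>level F m k. \<forall>G\<in>level F m k. init_seg (E \<inter> G) E \<and> init_seg (E \<inter> G) G) \<and>
     (\<forall>k. \<forall>G\<in>level F m (Suc k). \<exists>R Gs. canon_pieces F m nn r (Suc k) G R Gs)"

definition rho :: "'a set set \<Rightarrow> (nat \<Rightarrow> nat) \<Rightarrow> 'a \<Rightarrow> 'a \<Rightarrow> nat" where
  "rho F m \<alpha> \<beta> = (LEAST k. \<exists>G\<in>level F m k. {\<alpha>, \<beta>} \<subseteq> G)"

definition closure_k :: "'a::linorder set set \<Rightarrow> (nat \<Rightarrow> nat) \<Rightarrow> 'a \<Rightarrow> nat \<Rightarrow> 'a set" where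
  "closure_k F m \<alpha> k = {\<xi>. \<xi> \<le> \<alpha> \<and> rho F m \<xi> \<alpha> \<le> k}"

text \<open>Xi F m nn r \<alpha> l i  means  Xi_\<alpha>(l) = i  (with -1 for the root).\<close>
definition Xi ::
  "'a::linorder set set \<Rightarrow> (nat \<Rightarrow> nat) \<Rightarrow> (nat \<Rightarrow> nat) \<Rightarrow> (nat \<Rightarrow> nat) \<Rightarrow> 'a \<Rightarrow> nat \<Rightarrow> int \<Rightarrow> bool" where
  "Xi F m nn r \<alpha> l i \<longleftrightarrow> (\<exists>G R Gs. canon_pieces F m nn r l G R Gs \<and> \<alpha> \<in> G \<and>
      ((i = -1 \<and> \<alpha> \<in> R) \<or> (i \<ge> 0 \<and> \<alpha> \<in> Gs (nat i) - R)))"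

definition rtt_seq :: "(nat \<Rightarrow> 'a::linorder set) \<Rightarrow> nat \<Rightarrow> 'a set \<Rightarrow> bool" where
  "rtt_seq Ds n R \<longleftrightarrow> n \<ge> 2 \<and> (\<forall>i<n. finite (Ds i) \<and> card (Ds i) = card (Ds 0)) \<and>
     (\<forall>i<n. \<forall>j<n. i \<noteq> j \<longrightarrow> Ds i \<inter> Ds j = R) \<and>
     (\<forall>i<n. set_less R (Ds i - R)) \<and>
     (\<forall>i j. i < j \<and> j < n \<longrightarrow> set_less (Ds i - R) (Ds j - R))"

definition rtt_family :: "'a::linorder set set \<Rightarrow> 'a set \<Rightarrow> bool" where
  "rtt_family \<D> R \<longleftrightarrow> (\<exists>D E. D \<in> \<D> \<and> E \<in> \<D> \<and> D \<noteq> E) \<and>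
     (\<exists>mm. \<forall>D\<in>\<D>. finite D \<and> card D = mm) \<and>
     (\<forall>D\<in>\<D>. \<forall>E\<in>\<D>. D \<noteq> E \<longrightarrow> D \<inter> E = R) \<and>
     (\<forall>D\<in>\<D>. set_less R (D - R)) \<and>
     (\<forall>D\<in>\<D>. \<forall>E\<in>\<D>. D \<noteq> E \<longrightarrow> set_less (D - R) (E - R) \<or> set_less (E - R) (D - R))"

definition rho_captured ::
  "'a::linorder set set \<Rightarrow> (nat \<Rightarrow> nat) \<Rightarrow> (nat \<Rightarrow> nat) \<Rightarrow> (nat \<Rightarrow> nat)
     \<Rightarrow> (nat \<Rightarrow> 'a set) \<Rightarrow> nat \<Rightarrow> nat \<Rightarrow> bool" where
  "rho_captured F m nn r Ds n l \<longleftrightarrow> l \<ge> 1 \<and> n \<le> nn l \<and>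
     (\<exists>R. rtt_seq Ds n R \<and>
       (\<forall>i<n. \<forall>a<card (Ds 0).
          (a < card R \<longrightarrow> Xi F m nn r (elem (Ds i) a) l (-1)) \<and>
          (a \<ge> card R \<longrightarrow> Xi F m nn r (elem (Ds i) a) l (int i))) \<and>
       (\<forall>i j a. i < j \<and> j < n \<and> card R \<le> a \<and> a < card (Ds 0) \<longrightarrow>
          rho F m (elem (Ds i) a) (elem (Ds j) a) = l))"

definition rho_capturing ::
  "'a::linorder set set \<Rightarrow> (nat \<Rightarrow> nat) \<Rightarrow> (nat \<Rightarrow> nat) \<Rightarrow> (nat \<Rightarrow> nat) \<Rightarrow> nat \<Rightarrow> bool" where
  "rho_capturing F m nn r n \<longleftrightarrow>
     (\<forall>\<S>. uncountable \<S> \<and> (\<forall>s\<in>\<S>. finite s \<and> s \<noteq> {}) \<longrightarrow>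
        infinite {l. \<exists>Ds. (\<forall>i<n. Ds i \<in> \<S>) \<and> inj_on Ds {..<n} \<and> rho_captured F m nn r Ds n l})"

definition good_tuple ::
  "('a::wellorder \<Rightarrow> 'a set) \<Rightarrow> 'a set set \<Rightarrow> (nat \<Rightarrow> nat) \<Rightarrow> nat \<Rightarrow> 'a \<Rightarrow> nat \<Rightarrow> 'a set \<Rightarrow> bool" where
  "good_tuple C F m n \<delta> k A \<longleftrightarrow> \<delta> \<in> LimN C n \<and>
     (\<exists>R. rtt_family ((\<lambda>\<xi>. closure_k F m \<xi> k) ` CN C n \<delta>) R) \<and>
     A \<noteq> {} \<and> finite A \<and> (\<forall>a\<in>A. \<delta> \<le> a)"

definition IH_rho ::
  "('a::wellorder \<Rightarrow> 'a set) \<Rightarrow> 'a set set \<Rightarrow> (nat \<Rightarrow> nat) \<Rightarrow> (nat \<Rightarrow> nat) \<Rightarrow> (nat \<Rightarrow> nat) \<Rightarrow> nat \<Rightarrow> bool" where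
  "IH_rho C F m nn r n \<longleftrightarrow>
     (\<forall>\<delta> k A R. good_tuple C F m n \<delta> k A \<and>
        rtt_family ((\<lambda>\<xi>. closure_k F m \<xi> k) ` CN C n \<delta>) R \<longrightarrow>
        infinite {l. l \<ge> k \<and> nn l > n \<and>
          (\<exists>G RG Gs D. canon_pieces F m nn r l G RG Gs \<and>
             D \<subseteq> CN C n \<delta> \<and> finite D \<and> card D = n \<and>
             A \<subseteq> Gs n - RG \<and>
             (\<forall>i<n. closure_k F m (elem D i) k \<subseteq> Gs i \<and>
                     closure_k F m (elem D i) k \<inter> RG = R))})"

end

theory Submission
  imports Defs
begin

(* Index each member s of the uncountable family by its maximum xi and fix k with s contained in
   the closure (xi)_k for uncountably many xi.  After thinning out, the members and the closures
   both form Delta-systems in which every set lies below its index while the tail of a later set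
   lies above every earlier index; such systems are root-tail-tail.  The clubsuit-sequence yields
   delta with C^n_delta inside the thinned index set, and a member s_beta whose tail lies above
   delta serves as the set A of a good tuple.  Each of the infinitely many levels l provided by
   IH_rho(C, n) places the closures of n indices from C^n_delta into the first n canonical pieces
   of some G in F_l, meeting the root of G exactly in the root of the closures, and the tail of
   s_beta into the n-th piece; so these n + 1 members are rho-captured at level l. *)

lemma omega1_like_countable_atMost:
  "omega1_like TYPE('a::wellorder) \<Longrightarrow> countable {..x::'a}"
proof -
  assume "omega1_like TYPE('a)"
  then have "countable {..<x}"
    by (simp add: omega1_like_def)
  moreover have "{..x} = insert x {..<x}"
    by auto
  ultimately show ?thesis
    by simp
qed

lemma omega1_like_countable_imp_bounded:
  assumes "omega1_like TYPE('a::wellorder)" "countable (B::'a set)"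
  obtains \<gamma> where "\<forall>b\<in>B. b < \<gamma>"
proof -
  have "countable (\<Union>b\<in>B. {..b})"
    using assms omega1_like_countable_atMost by (intro countable_UN) auto
  moreover have "uncountable (UNIV::'a set)"
    using assms(1) by (simp add: omega1_like_def)
  ultimately have "(\<Union>b\<in>B. {..b}) \<noteq> UNIV"
    by auto
  then obtain \<gamma> where "\<gamma> \<notin> (\<Union>b\<in>B. {..b})"
    by auto
  then show thesis
    using that by (auto simp: not_le)
qed

lemma omega1_like_uncountable_iff_unbounded:
  assumes "omega1_like TYPE('a::wellorder)"
  shows "uncountable (X::'a set) \<longleftrightarrow> (\<forall>\<alpha>. \<exists>\<xi>\<in>X. \<alpha> < \<xi>)"
proof
  assume "uncountable X"
  show "\<forall>\<alpha>. \<exists>\<xi>\<in>X. \<alpha> < \<xi>"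
  proof
    fix \<alpha>
    have "\<not> X \<subseteq> {..\<alpha>}"
      using \<open>uncountable X\<close> omega1_like_countable_atMost[OF assms] countable_subset by blast
    then show "\<exists>\<xi>\<in>X. \<alpha> < \<xi>"
      by (auto simp: not_le)
  qed
next
  assume unbounded: "\<forall>\<alpha>. \<exists>\<xi>\<in>X. \<alpha> < \<xi>"
  show "uncountable X"
  proof
    assume "countable X"
    then obtain \<gamma> where "\<forall>\<xi>\<in>X. \<xi> < \<gamma>"
      using omega1_like_countable_imp_bounded[OF assms] by blast
    then show False
      using unbounded by (meson less_asym)
  qed
qed

lemma uncountable_greaterThan:
  assumes "omega1_like TYPE('a::wellorder)" "uncountable (X::'a set)"
  shows "uncountable {\<xi>\<in>X. \<alpha> < \<xi>}"
proof
  assume "countable {\<xi>\<in>X. \<alpha> < \<xi>}"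
  moreover have "X \<subseteq> {\<xi>\<in>X. \<alpha> < \<xi>} \<union> {..\<alpha>}"
    by auto
  moreover have "countable {..\<alpha>}"
    using assms(1) by (rule omega1_like_countable_atMost)
  ultimately show False
    using assms(2) countable_subset by (metis countable_Un)
qed

lemma uncountable_fiber:
  assumes "uncountable A" "countable B" "f ` A \<subseteq> B"
  obtains y where "y \<in> B" "uncountable {x\<in>A. f x = y}"
proof -
  have "\<exists>y\<in>B. uncountable {x\<in>A. f x = y}"
  proof (rule ccontr)
    assume "\<not> ?thesis"
    then have "countable (\<Union>y\<in>B. {x\<in>A. f x = y})"
      using assms(2) by (intro countable_UN) auto
    moreover have "A = (\<Union>y\<in>B. {x\<in>A. f x = y})"
      using assms(3) by auto
    ultimately show False
      using assms(1) by simp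
  qed
  then show thesis
    using that by blast
qed

lemma maximal_pairwise_subset:
  obtains X where "X \<subseteq> Y" "pairwise P X" "\<forall>X'. X' \<subseteq> Y \<and> pairwise P X' \<and> X \<subseteq> X' \<longrightarrow> X' = X"
proof -
  define \<A> where "\<A> = {X. X \<subseteq> Y \<and> pairwise P X}"
  have "\<Union>\<C> \<in> \<A>" if "\<C> \<in> chains \<A>" for \<C>
  proof -
    have \<C>: "\<C> \<subseteq> \<A>" "chain\<^sub>\<subseteq> \<C>"
      using that unfolding chains_def by simp_all
    have "pairwise P (\<Union>\<C>)"
    proof (rule pairwise_chain_Union)
      show "pairwise P S" if "S \<in> \<C>" for S
        using that \<C>(1) unfolding \<A>_def by blast
    qed (rule \<C>(2))
    moreover have "\<Union>\<C> \<subseteq> Y"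
      using \<C>(1) unfolding \<A>_def by blast
    ultimately show ?thesis
      unfolding \<A>_def by blast
  qed
  then obtain X where X: "X \<in> \<A>" and maximal: "\<forall>X'\<in>\<A>. X \<subseteq> X' \<longrightarrow> X' = X"
    using Zorn_Lemma[of \<A>] by blast
  show thesis
  proof (rule that)
    show "X \<subseteq> Y" "pairwise P X"
      using X unfolding \<A>_def by auto
    show "\<forall>X'. X' \<subseteq> Y \<and> pairwise P X' \<and> X \<subseteq> X' \<longrightarrow> X' = X"
      using maximal unfolding \<A>_def by blast
  qed
qed

text \<open>A maximal such subset is uncountable: a countable one is bounded by some \<gamma>, and any \<xi>
  above \<gamma> with \<gamma> < t \<xi> could be added to it.\<close>

lemma uncountable_sparse_subset:
  fixes Y :: "'a::wellorder set"
  assumes o1: "omega1_like TYPE('a)" and Y: "uncountable Y"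
    and t: "\<And>\<beta>. countable {\<xi>\<in>Y. t \<xi> \<le> \<beta>}"
  obtains X where "X \<subseteq> Y" "uncountable X" "\<forall>\<xi>\<in>X. \<forall>\<xi>'\<in>X. \<xi> < \<xi>' \<longrightarrow> \<xi> < t \<xi>'"
proof -
  let ?sparse = "pairwise (\<lambda>\<xi> \<xi>'. \<xi> < \<xi>' \<longrightarrow> \<xi> < t \<xi>')"
  have sparse_iff: "?sparse X \<longleftrightarrow> (\<forall>\<xi>\<in>X. \<forall>\<xi>'\<in>X. \<xi> < \<xi>' \<longrightarrow> \<xi> < t \<xi>')" for X
    unfolding pairwise_def by auto
  obtain X where "X \<subseteq> Y" "?sparse X"
    and maximal: "\<forall>X'. X' \<subseteq> Y \<and> ?sparse X' \<and> X \<subseteq> X' \<longrightarrow> X' = X"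
    by (rule maximal_pairwise_subset)
  have "uncountable X"
  proof
    assume "countable X"
    then obtain \<gamma> where \<gamma>: "\<forall>\<xi>\<in>X. \<xi> < \<gamma>"
      using omega1_like_countable_imp_bounded[OF o1] by blast
    have "countable ({\<xi>\<in>Y. t \<xi> \<le> \<gamma>} \<union> {..\<gamma>})"
      using t omega1_like_countable_atMost[OF o1] by simp
    then have "\<not> Y \<subseteq> {\<xi>\<in>Y. t \<xi> \<le> \<gamma>} \<union> {..\<gamma>}"
      using Y countable_subset by blast
    then obtain \<xi> where \<xi>: "\<xi> \<in> Y" "\<gamma> < t \<xi>" "\<gamma> < \<xi>"
      using not_le by blast
    have "\<forall>x\<in>X. x < \<xi> \<and> x < t \<xi>"
      using \<gamma> \<xi> by (meson less_trans)
    then have "?sparse (insert \<xi> X)"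
      using \<open>?sparse X\<close> unfolding sparse_iff by (auto dest: less_asym)
    moreover have "insert \<xi> X \<subseteq> Y"
      using \<open>X \<subseteq> Y\<close> \<xi>(1) by blast
    ultimately have "insert \<xi> X = X"
      using maximal by blast
    then show False
      using \<gamma> \<xi>(3) by (metis insertI1 less_asym)
  qed
  show thesis
    using \<open>X \<subseteq> Y\<close> \<open>uncountable X\<close> \<open>?sparse X\<close>[unfolded sparse_iff] by (rule that)
qed

lemma init_seg_iff_set_less:
  "init_seg R (A::'a::linorder set) \<longleftrightarrow> R \<subseteq> A \<and> set_less R (A - R)"
proof -
  have "(\<forall>x\<in>R. \<forall>y\<in>A. y < x \<longrightarrow> y \<in> R) \<longleftrightarrow> (\<forall>x\<in>R. \<forall>y\<in>A - R. x < y)"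
  proof (intro iffI ballI)
    fix x y assume "\<forall>x\<in>R. \<forall>y\<in>A. y < x \<longrightarrow> y \<in> R" "x \<in> R" "y \<in> A - R"
    then show "x < y"
      by (cases x y rule: linorder_cases) auto
  next
    fix x y assume "\<forall>x\<in>R. \<forall>y\<in>A - R. x < y" "x \<in> R" "y \<in> A"
    then show "y < x \<longrightarrow> y \<in> R"
      by (cases "y \<in> R") (auto dest: less_asym)
  qed
  then show ?thesis
    unfolding init_seg_def set_less_def by blast
qed

lemma init_seg_insert_Min:
  fixes A :: "'a::linorder set"
  assumes "finite A" "init_seg R A" "R \<noteq> A"
  shows "init_seg (insert (Min (A - R)) R) A"
proof -
  have "A - R \<noteq> {}"
    using assms(2,3) unfolding init_seg_def by blast
  then have "Min (A - R) \<in> A - R"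
    using assms(1) by (intro Min_in) auto
  moreover have "\<forall>y\<in>A - R. Min (A - R) \<le> y"
    using assms(1) by simp
  ultimately show ?thesis
    using assms(2) unfolding init_seg_def by (auto simp: not_le[symmetric])
qed

lemma sorted_list_of_set_init_seg:
  fixes D :: "'a::linorder set"
  assumes "finite D" "init_seg R D"
  shows "sorted_list_of_set D = sorted_list_of_set R @ sorted_list_of_set (D - R)"
proof -
  have R: "R \<subseteq> D" "set_less R (D - R)"
    using assms(2) by (simp_all add: init_seg_iff_set_less)
  have "finite R"
    using R(1) assms(1) by (rule finite_subset)
  then have "sorted_wrt (<) (sorted_list_of_set R @ sorted_list_of_set (D - R))"
    using R(2) assms(1) unfolding sorted_wrt_append set_less_def by simp
  then show ?thesis
    by (rule strict_sorted_equal[OF _ strict_sorted_list_of_set])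
      (use R(1) \<open>finite R\<close> assms(1) in auto)
qed

lemma elem_mem: "finite D \<Longrightarrow> a < card D \<Longrightarrow> elem D a \<in> D"
  unfolding elem_def by (metis length_sorted_list_of_set nth_mem set_sorted_list_of_set)

lemma elem_strict_mono: "finite D \<Longrightarrow> strict_mono_on {..<card D} (elem D)"
  unfolding elem_def strict_mono_on_def
  by (metis lessThan_iff length_sorted_list_of_set sorted_wrt_nth_less strict_sorted_list_of_set)

lemma elem_mem_init_seg_iff:
  fixes D :: "'a::linorder set"
  assumes "finite D" "init_seg R D" "a < card D"
  shows "elem D a \<in> R \<longleftrightarrow> a < card R"
proof -
  have "R \<subseteq> D"
    using assms(2) unfolding init_seg_def by blast
  moreover have "finite R"
    using \<open>R \<subseteq> D\<close> assms(1) by (rule finite_subset)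
  ultimately have "card D = card R + card (D - R)"
    using assms(1) by (simp add: card_Diff_subset card_mono)
  note split = sorted_list_of_set_init_seg[OF assms(1,2)]
  show ?thesis
  proof (cases "a < card R")
    case True
    then have "elem D a = elem R a"
      unfolding elem_def split by (simp add: nth_append)
    then show ?thesis
      using elem_mem[OF \<open>finite R\<close> True] True by simp
  next
    case False
    then have "elem D a = elem (D - R) (a - card R)"
      unfolding elem_def split by (simp add: nth_append)
    moreover have "a - card R < card (D - R)"
      using False assms(3) \<open>card D = card R + card (D - R)\<close> by simp
    ultimately show ?thesis
      using elem_mem[of "D - R" "a - card R"] assms(1) False by simp
  qed
qed

lemma rtt_seqD:
  assumes "rtt_seq Ds N R" "i < N"
  shows "finite (Ds i)" "card (Ds i) = card (Ds 0)" "set_less R (Ds i - R)" "2 \<le> N"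
    and "j < N \<Longrightarrow> i \<noteq> j \<Longrightarrow> Ds i \<inter> Ds j = R"
  using assms unfolding rtt_seq_def by blast+

definition indexed_delta_system :: "'a::linorder set \<Rightarrow> ('a \<Rightarrow> 'a set) \<Rightarrow> 'a set \<Rightarrow> bool" where
  "indexed_delta_system X f R \<longleftrightarrow>
     (\<exists>c. \<forall>\<xi>\<in>X. finite (f \<xi>) \<and> card (f \<xi>) = c) \<and>
     (\<forall>\<xi>\<in>X. f \<xi> \<subseteq> {..\<xi>} \<and> init_seg R (f \<xi>) \<and> R \<noteq> f \<xi>) \<and>
     (\<forall>\<xi>\<in>X. \<forall>\<xi>'\<in>X. \<xi> < \<xi>' \<longrightarrow> (\<forall>z\<in>f \<xi>' - R. \<xi> < z))"

lemma uncountable_common_init_seg_max_card: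
  assumes Y: "uncountable Y" and f: "\<And>\<xi>. \<xi> \<in> Y \<Longrightarrow> finite (f \<xi>) \<and> card (f \<xi>) = c"
  obtains R where "uncountable {\<xi>\<in>Y. init_seg R (f \<xi>)}"
    "\<forall>R'. uncountable {\<xi>\<in>Y. init_seg R' (f \<xi>)} \<longrightarrow> card R' \<le> card R"
proof -
  have "uncountable {\<xi>\<in>Y. init_seg {} (f \<xi>)}"
    using Y unfolding init_seg_def by simp
  moreover have "\<forall>R. uncountable {\<xi>\<in>Y. init_seg R (f \<xi>)} \<longrightarrow> card R < Suc c"
  proof (intro allI impI)
    fix R assume "uncountable {\<xi>\<in>Y. init_seg R (f \<xi>)}"
    then have "{\<xi>\<in>Y. init_seg R (f \<xi>)} \<noteq> {}"
      by (metis countable_empty)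
    then obtain \<xi> where \<xi>: "\<xi> \<in> Y" "init_seg R (f \<xi>)"
      by blast
    then have "card R \<le> card (f \<xi>)"
      using f[OF \<xi>(1)] unfolding init_seg_def by (intro card_mono) auto
    then show "card R < Suc c"
      using f[OF \<xi>(1)] by simp
  qed
  ultimately obtain R where R: "uncountable {\<xi>\<in>Y. init_seg R (f \<xi>)}"
    and maximal: "\<forall>R'. uncountable {\<xi>\<in>Y. init_seg R' (f \<xi>)} \<longrightarrow> card R' \<le> card R"
    using Lattices_Big.ex_has_greatest_nat[of "\<lambda>R. uncountable {\<xi>\<in>Y. init_seg R (f \<xi>)}" "{}" card "Suc c"]
    by blast
  then show thesis
    by (rule that)
qed

lemma uncountable_common_init_seg_extend:
  fixes f :: "'a::wellorder \<Rightarrow> 'a set"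
  assumes o1: "omega1_like TYPE('a)" and Y: "uncountable {\<xi>\<in>Y. Min (f \<xi> - R) \<le> \<beta>}"
    and f: "\<And>\<xi>. \<xi> \<in> Y \<Longrightarrow> finite (f \<xi>) \<and> init_seg R (f \<xi>) \<and> R \<noteq> f \<xi>"
  obtains v where "v \<notin> R" "uncountable {\<xi>\<in>Y. init_seg (insert v R) (f \<xi>)}"
proof -
  have "(\<lambda>\<xi>. Min (f \<xi> - R)) ` {\<xi>\<in>Y. Min (f \<xi> - R) \<le> \<beta>} \<subseteq> {..\<beta>}"
    by auto
  then obtain v where "v \<in> {..\<beta>}"
    and v: "uncountable {\<xi>\<in>{\<xi>\<in>Y. Min (f \<xi> - R) \<le> \<beta>}. Min (f \<xi> - R) = v}"
    by (rule uncountable_fiber[OF Y omega1_like_countable_atMost[OF o1]])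
  define Z where "Z = {\<xi>\<in>{\<xi>\<in>Y. Min (f \<xi> - R) \<le> \<beta>}. Min (f \<xi> - R) = v}"
  have extends: "\<xi> \<in> Y \<and> init_seg (insert v R) (f \<xi>) \<and> v \<notin> R" if "\<xi> \<in> Z" for \<xi>
  proof -
    have \<xi>: "\<xi> \<in> Y" "Min (f \<xi> - R) = v"
      using that unfolding Z_def by auto
    then have "f \<xi> - R \<noteq> {}"
      using f[OF \<xi>(1)] unfolding init_seg_def by blast
    then have "v \<in> f \<xi> - R"
      using \<xi>(2) f[OF \<xi>(1)] Min_in[of "f \<xi> - R"] by simp
    then show ?thesis
      using init_seg_insert_Min[of "f \<xi>" R] \<xi> f[OF \<xi>(1)] by simp
  qed
  have "Z \<noteq> {}"
    using v unfolding Z_def by (metis countable_empty)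
  then have "v \<notin> R"
    using extends by blast
  moreover have "Z \<subseteq> {\<xi>\<in>Y. init_seg (insert v R) (f \<xi>)}"
    using extends by blast
  then have "uncountable {\<xi>\<in>Y. init_seg (insert v R) (f \<xi>)}"
    using v countable_subset unfolding Z_def by blast
  ultimately show thesis
    by (rule that)
qed

lemma uncountable_proper_init_seg:
  assumes R: "uncountable {\<xi>\<in>Y. init_seg R (f \<xi>)}"
    and f: "\<And>\<xi>. \<xi> \<in> Y \<Longrightarrow> finite (f \<xi>) \<and> \<xi> \<in> f \<xi> \<and> f \<xi> \<subseteq> {..\<xi>}"
  shows "uncountable {\<xi>\<in>Y. init_seg R (f \<xi>) \<and> R \<noteq> f \<xi>}"
proof
  assume "countable {\<xi>\<in>Y. init_seg R (f \<xi>) \<and> R \<noteq> f \<xi>}"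
  then have countable: "countable ({\<xi>\<in>Y. init_seg R (f \<xi>) \<and> R \<noteq> f \<xi>} \<union> {Max R})"
    by simp
  have subset: "{\<xi>\<in>Y. init_seg R (f \<xi>)} \<subseteq> {\<xi>\<in>Y. init_seg R (f \<xi>) \<and> R \<noteq> f \<xi>} \<union> {Max R}"
  proof
    fix \<xi> assume \<xi>: "\<xi> \<in> {\<xi>\<in>Y. init_seg R (f \<xi>)}"
    show "\<xi> \<in> {\<xi>\<in>Y. init_seg R (f \<xi>) \<and> R \<noteq> f \<xi>} \<union> {Max R}"
    proof (cases "f \<xi> = R")
      case True
      then have "finite R" "\<xi> \<in> R" "R \<subseteq> {..\<xi>}"
        using f[of \<xi>] \<xi> by auto
      then have "Max R = \<xi>"
        by (intro Max_eqI) auto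
      then show ?thesis
        by simp
    qed (use \<xi> in simp)
  qed
  show False
    using countable_subset[OF subset countable] R by simp
qed

text \<open>A maximal common initial segment R of uncountably many members: if uncountably many tails
  started below some \<beta>, pigeonholing their least elements would extend R.\<close>

lemma uncountable_maximal_common_root:
  fixes f :: "'a::wellorder \<Rightarrow> 'a set"
  assumes o1: "omega1_like TYPE('a)" and Y: "uncountable Y"
    and f: "\<And>\<xi>. \<xi> \<in> Y \<Longrightarrow> finite (f \<xi>) \<and> \<xi> \<in> f \<xi> \<and> f \<xi> \<subseteq> {..\<xi>} \<and> card (f \<xi>) = c"
  obtains R Y' where "Y' \<subseteq> Y" "uncountable Y'" "\<forall>\<xi>\<in>Y'. init_seg R (f \<xi>) \<and> R \<noteq> f \<xi>"
    "\<And>\<beta>. countable {\<xi>\<in>Y'. Min (f \<xi> - R) \<le> \<beta>}"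
proof -
  have "\<And>\<xi>. \<xi> \<in> Y \<Longrightarrow> finite (f \<xi>) \<and> card (f \<xi>) = c"
    using f by blast
  then obtain R where R: "uncountable {\<xi>\<in>Y. init_seg R (f \<xi>)}"
    and maximal: "\<forall>R'. uncountable {\<xi>\<in>Y. init_seg R' (f \<xi>)} \<longrightarrow> card R' \<le> card R"
    by (rule uncountable_common_init_seg_max_card[OF Y])
  define Y' where "Y' = {\<xi>\<in>Y. init_seg R (f \<xi>) \<and> R \<noteq> f \<xi>}"
  have "uncountable Y'"
    unfolding Y'_def by (rule uncountable_proper_init_seg[OF R]) (use f in blast)
  then obtain \<xi> where "\<xi> \<in> Y'"
    by (metis countable_empty ex_in_conv)
  then have "R \<subseteq> f \<xi>" "finite (f \<xi>)"
    using f unfolding Y'_def init_seg_def by auto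
  then have "finite R"
    by (rule finite_subset)
  have tails_above: "countable {\<xi>\<in>Y'. Min (f \<xi> - R) \<le> \<beta>}" for \<beta>
  proof (rule ccontr)
    assume "uncountable {\<xi>\<in>Y'. Min (f \<xi> - R) \<le> \<beta>}"
    then obtain v where "v \<notin> R" and v: "uncountable {\<xi>\<in>Y'. init_seg (insert v R) (f \<xi>)}"
      by (rule uncountable_common_init_seg_extend[OF o1]) (use f in \<open>auto simp: Y'_def\<close>)
    have "{\<xi>\<in>Y'. init_seg (insert v R) (f \<xi>)} \<subseteq> {\<xi>\<in>Y. init_seg (insert v R) (f \<xi>)}"
      unfolding Y'_def by blast
    then have "uncountable {\<xi>\<in>Y. init_seg (insert v R) (f \<xi>)}"
      using v countable_subset by blast
    then have "card (insert v R) \<le> card R"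
      using maximal by blast
    then show False
      using \<open>v \<notin> R\<close> \<open>finite R\<close> by simp
  qed
  show thesis
    by (rule that[OF _ \<open>uncountable Y'\<close> _ tails_above]) (auto simp: Y'_def)
qed

lemma uncountable_indexed_delta_system:
  fixes f :: "'a::wellorder \<Rightarrow> 'a set"
  assumes o1: "omega1_like TYPE('a)" and Y: "uncountable Y"
    and f: "\<And>\<xi>. \<xi> \<in> Y \<Longrightarrow> finite (f \<xi>) \<and> \<xi> \<in> f \<xi> \<and> f \<xi> \<subseteq> {..\<xi>}"
  obtains X R where "X \<subseteq> Y" "uncountable X" "indexed_delta_system X f R"
proof -
  obtain c where "c \<in> UNIV" and Yc: "uncountable {\<xi>\<in>Y. card (f \<xi>) = c}"
    by (rule uncountable_fiber[OF Y _ subset_UNIV, where f="\<lambda>\<xi>. card (f \<xi>)"]) simp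
  obtain R Y' where Y': "Y' \<subseteq> {\<xi>\<in>Y. card (f \<xi>) = c}" "uncountable Y'"
      "\<forall>\<xi>\<in>Y'. init_seg R (f \<xi>) \<and> R \<noteq> f \<xi>" "\<And>\<beta>. countable {\<xi>\<in>Y'. Min (f \<xi> - R) \<le> \<beta>}"
    by (rule uncountable_maximal_common_root[OF o1 Yc, where f=f and c=c]) (use f in auto)
  obtain X where X: "X \<subseteq> Y'" "uncountable X" "\<forall>\<xi>\<in>X. \<forall>\<xi>'\<in>X. \<xi> < \<xi>' \<longrightarrow> \<xi> < Min (f \<xi>' - R)"
    by (rule uncountable_sparse_subset[OF o1 Y'(2) Y'(4)])
  have "X \<subseteq> Y"
    using X(1) Y'(1) by blast
  moreover have "indexed_delta_system X f R"
    unfolding indexed_delta_system_def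
  proof (intro conjI)
    show "\<exists>c. \<forall>\<xi>\<in>X. finite (f \<xi>) \<and> card (f \<xi>) = c"
      using X(1) Y'(1) f by blast
    show "\<forall>\<xi>\<in>X. f \<xi> \<subseteq> {..\<xi>} \<and> init_seg R (f \<xi>) \<and> R \<noteq> f \<xi>"
      using X(1) Y'(1,3) f by blast
    show "\<forall>\<xi>\<in>X. \<forall>\<xi>'\<in>X. \<xi> < \<xi>' \<longrightarrow> (\<forall>z\<in>f \<xi>' - R. \<xi> < z)"
    proof (intro ballI impI)
      fix \<xi> \<xi>' z assume "\<xi> \<in> X" "\<xi>' \<in> X" "\<xi> < \<xi>'" "z \<in> f \<xi>' - R"
      moreover have "finite (f \<xi>')"
        using \<open>\<xi>' \<in> X\<close> X(1) Y'(1) f by blast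
      ultimately have "\<xi> < Min (f \<xi>' - R)" "Min (f \<xi>' - R) \<le> z"
        using X(3) by auto
      then show "\<xi> < z"
        by (rule less_le_trans)
    qed
  qed
  ultimately show thesis
    using X(2) by (intro that)
qed

lemma indexed_delta_systemD:
  assumes "indexed_delta_system X f R" "\<xi> \<in> X"
  shows "finite (f \<xi>)" "f \<xi> \<subseteq> {..\<xi>}" "init_seg R (f \<xi>)" "R \<noteq> f \<xi>"
  using assms unfolding indexed_delta_system_def by auto

lemma indexed_delta_system_card:
  "indexed_delta_system X f R \<Longrightarrow> \<xi> \<in> X \<Longrightarrow> \<xi>' \<in> X \<Longrightarrow> card (f \<xi>) = card (f \<xi>')"
  unfolding indexed_delta_system_def by metis

lemma indexed_delta_system_less_tail:
  "indexed_delta_system X f R \<Longrightarrow> \<xi> \<in> X \<Longrightarrow> \<xi>' \<in> X \<Longrightarrow> \<xi> < \<xi>' \<Longrightarrow> z \<in> f \<xi>' - R \<Longrightarrow> \<xi> < z"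
  unfolding indexed_delta_system_def by blast

lemma indexed_delta_system_subset:
  "indexed_delta_system X f R \<Longrightarrow> X' \<subseteq> X \<Longrightarrow> indexed_delta_system X' f R"
  unfolding indexed_delta_system_def by (metis subsetD)

lemma indexed_delta_system_pair:
  assumes sys: "indexed_delta_system X f R" and "\<xi> \<in> X" "\<xi>' \<in> X" "\<xi> < \<xi>'"
  shows "f \<xi> \<inter> f \<xi>' = R" "set_less (f \<xi> - R) (f \<xi>' - R)"
proof -
  have below: "y \<le> \<xi>" if "y \<in> f \<xi>" for y
    using indexed_delta_systemD(2)[OF sys \<open>\<xi> \<in> X\<close>] that by auto
  have above: "\<xi> < z" if "z \<in> f \<xi>' - R" for z
    using indexed_delta_system_less_tail[OF assms that] .
  have "R \<subseteq> f \<xi>" "R \<subseteq> f \<xi>'"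
    using indexed_delta_systemD(3)[OF sys] assms(2,3) unfolding init_seg_def by auto
  moreover have "x \<in> R" if "x \<in> f \<xi>" "x \<in> f \<xi>'" for x
    using below[OF that(1)] above[of x] that(2) by (meson DiffI not_le)
  ultimately show "f \<xi> \<inter> f \<xi>' = R"
    by blast
  show "set_less (f \<xi> - R) (f \<xi>' - R)"
    unfolding set_less_def using below above by (meson DiffD1 le_less_trans)
qed

lemma indexed_delta_system_Int:
  assumes "indexed_delta_system X f R" "\<xi> \<in> X" "\<xi>' \<in> X" "\<xi> \<noteq> \<xi>'"
  shows "f \<xi> \<inter> f \<xi>' = R"
  using assms indexed_delta_system_pair(1)[OF assms(1)]
  by (metis Int_commute linorder_neqE)

lemma indexed_delta_system_tail_above:
  assumes sys: "indexed_delta_system X f R" and unbounded: "\<forall>\<alpha>. \<exists>\<xi>\<in>X. \<alpha> < \<xi>"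
  obtains \<beta> where "\<beta> \<in> X" "\<alpha> < \<beta>" "\<forall>z\<in>f \<beta> - R. \<alpha> < z"
proof -
  obtain \<xi> where "\<xi> \<in> X" "\<alpha> < \<xi>"
    using unbounded by blast
  moreover obtain \<beta> where "\<beta> \<in> X" "\<xi> < \<beta>"
    using unbounded by blast
  ultimately have "\<forall>z\<in>f \<beta> - R. \<alpha> < z"
    using indexed_delta_system_less_tail[OF sys] less_trans by blast
  then show thesis
    using that \<open>\<beta> \<in> X\<close> \<open>\<alpha> < \<xi>\<close> \<open>\<xi> < \<beta>\<close> less_trans by blast
qed

lemma indexed_delta_system_refine:
  assumes sub: "indexed_delta_system X s R" and sup: "indexed_delta_system X T R'"
    and "\<And>\<xi>. \<xi> \<in> X \<Longrightarrow> s \<xi> \<subseteq> T \<xi>" and "\<xi>\<^sub>0 \<in> X" "\<xi> \<in> X" "\<xi>\<^sub>0 < \<xi>"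
  shows "R \<subseteq> R'" "s \<xi> - R \<subseteq> T \<xi> - R'"
proof -
  have "R \<subseteq> s \<xi>\<^sub>0 \<inter> s \<xi>"
    using indexed_delta_system_pair(1)[OF sub assms(4-6)] by simp
  also have "\<dots> \<subseteq> T \<xi>\<^sub>0 \<inter> T \<xi>"
    using assms(3-5) by blast
  also have "\<dots> = R'"
    using indexed_delta_system_pair(1)[OF sup assms(4-6)] .
  finally show "R \<subseteq> R'" .
  have "R' \<subseteq> {..\<xi>\<^sub>0}"
    using indexed_delta_systemD(2,3)[OF sup assms(4)] unfolding init_seg_def by blast
  moreover have "\<xi>\<^sub>0 < z" if "z \<in> s \<xi> - R" for z
    using indexed_delta_system_less_tail[OF sub assms(4-6) that] .
  ultimately show "s \<xi> - R \<subseteq> T \<xi> - R'"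
    using assms(3,5) by (auto dest: leD)
qed

lemma indexed_delta_system_rtt_family:
  assumes sys: "indexed_delta_system X f R" and "Y \<subseteq> X" "infinite Y"
  shows "rtt_family (f ` Y) R"
proof -
  obtain \<xi> where \<xi>: "\<xi> \<in> Y"
    using assms(3) by (metis finite.emptyI ex_in_conv)
  moreover obtain \<xi>' where \<xi>': "\<xi>' \<in> Y - {\<xi>}"
    using assms(3) by (metis finite.emptyI ex_in_conv infinite_remove)
  moreover have "f \<xi> \<noteq> f \<xi>'"
    using indexed_delta_system_Int[OF sys] indexed_delta_systemD(4)[OF sys] \<xi> \<xi>' assms(2)
    by (metis Diff_iff Int_absorb insertCI subsetD)
  ultimately have "\<exists>D E. D \<in> f ` Y \<and> E \<in> f ` Y \<and> D \<noteq> E"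
    by blast
  moreover have "\<exists>c. \<forall>D\<in>f ` Y. finite D \<and> card D = c"
    using sys assms(2) unfolding indexed_delta_system_def by blast
  moreover have "D \<inter> E = R" if "D \<in> f ` Y" "E \<in> f ` Y" "D \<noteq> E" for D E
    using that indexed_delta_system_Int[OF sys] assms(2) by blast
  moreover have "set_less R (D - R)" if "D \<in> f ` Y" for D
    using that indexed_delta_systemD(3)[OF sys] assms(2) init_seg_iff_set_less by blast
  moreover have "set_less (D - R) (E - R) \<or> set_less (E - R) (D - R)"
    if "D \<in> f ` Y" "E \<in> f ` Y" "D \<noteq> E" for D E
    using that indexed_delta_system_pair(2)[OF sys] assms(2) by (metis image_iff linorder_neqE subsetD)
  ultimately show ?thesis
    unfolding rtt_family_def by blast
qed

lemma indexed_delta_system_rtt_seq: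
  assumes sys: "indexed_delta_system X f R"
    and idx: "strict_mono_on {..<N} idx" "idx ` {..<N} \<subseteq> X" and "2 \<le> N"
  shows "rtt_seq (\<lambda>i. f (idx i)) N R" "inj_on (\<lambda>i. f (idx i)) {..<N}"
proof -
  have X: "idx i \<in> X" if "i < N" for i
    using idx(2) that by auto
  have pair: "f (idx i) \<inter> f (idx j) = R \<and> set_less (f (idx i) - R) (f (idx j) - R)" if "i < j" "j < N" for i j
    using indexed_delta_system_pair[OF sys X X strict_mono_onD[OF idx(1)]] that by simp
  have "rtt_seq (\<lambda>i. f (idx i)) N R"
    unfolding rtt_seq_def
  proof (intro conjI allI impI)
    fix i assume "i < N"
    then show "finite (f (idx i))" "card (f (idx i)) = card (f (idx 0))" "set_less R (f (idx i) - R)"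
      using X indexed_delta_systemD[OF sys] indexed_delta_system_card[OF sys] \<open>2 \<le> N\<close>
      by (auto simp: init_seg_iff_set_less)
  next
    fix i j assume "i < N" "j < N" "i \<noteq> j"
    then show "f (idx i) \<inter> f (idx j) = R"
      using pair[of i j] pair[of j i] by (metis Int_commute linorder_neqE)
  qed (use \<open>2 \<le> N\<close> pair in auto)
  moreover have "inj_on (\<lambda>i. f (idx i)) {..<N}"
  proof (rule inj_onI)
    fix i j assume "i \<in> {..<N}" "j \<in> {..<N}" "f (idx i) = f (idx j)"
    then show "i = j"
      using pair[of i j] pair[of j i] indexed_delta_systemD(4)[OF sys X]
      by (metis Int_absorb lessThan_iff linorder_neqE)
  qed
  ultimately show "rtt_seq (\<lambda>i. f (idx i)) N R" "inj_on (\<lambda>i. f (idx i)) {..<N}"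
    by blast+
qed

lemma clubsuit_seqD:
  "clubsuit_seq C \<Longrightarrow> \<delta> \<in> Lim \<Longrightarrow> C \<delta> \<subseteq> {..<\<delta>} \<and> infinite (C \<delta>)"
  unfolding clubsuit_seq_def by blast

lemma CN_subset_lessThan:
  "clubsuit_seq C \<Longrightarrow> \<delta> \<in> LimN C j \<Longrightarrow> CN C j \<delta> \<subseteq> {..<\<delta>}"
proof (induction j arbitrary: \<delta>)
  case 0
  then show ?case
    using clubsuit_seqD[of C \<delta>] by simp
next
  case (Suc j)
  then have "\<delta> \<in> Lim" "C \<delta> \<subseteq> LimN C j"
    by auto
  show ?case
  proof
    fix x assume "x \<in> CN C (Suc j) \<delta>"
    then obtain \<xi> where "\<xi> \<in> C \<delta>" "x \<in> CN C j \<xi>"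
      by auto
    then have "x < \<xi>" "\<xi> < \<delta>"
      using Suc clubsuit_seqD[OF Suc.prems(1) \<open>\<delta> \<in> Lim\<close>] \<open>C \<delta> \<subseteq> LimN C j\<close> by auto
    then show "x \<in> {..<\<delta>}"
      by simp
  qed
qed

lemma CN_infinite:
  "clubsuit_seq C \<Longrightarrow> \<delta> \<in> LimN C j \<Longrightarrow> infinite (CN C j \<delta>)"
proof (induction j arbitrary: \<delta>)
  case 0
  then show ?case
    using clubsuit_seqD[of C \<delta>] by simp
next
  case (Suc j)
  then have "\<delta> \<in> Lim" "C \<delta> \<subseteq> LimN C j"
    by auto
  then obtain \<xi> where "\<xi> \<in> C \<delta>"
    using clubsuit_seqD[OF Suc.prems(1)] by (metis finite.emptyI ex_in_conv)
  then have "infinite (CN C j \<xi>)" "CN C j \<xi> \<subseteq> CN C (Suc j) \<delta>"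
    using Suc \<open>C \<delta> \<subseteq> LimN C j\<close> by auto
  then show ?case
    using finite_subset by blast
qed

lemma stationary_imp_uncountable:
  assumes o1: "omega1_like TYPE('a::wellorder)" and "stationary (S::'a set)"
  shows "uncountable S"
proof -
  have "club {\<gamma>. \<alpha> < \<gamma>}" for \<alpha> :: 'a
    unfolding club_def
  proof (intro conjI allI ballI impI)
    fix \<beta> :: 'a
    have "countable {\<alpha>, \<beta>}"
      by simp
    then obtain \<gamma> where "\<forall>b\<in>{\<alpha>, \<beta>}. b < \<gamma>"
      by (rule omega1_like_countable_imp_bounded[OF o1])
    then have "\<gamma> \<in> {\<gamma>. \<alpha> < \<gamma>}" "\<beta> < \<gamma>"
      by simp_all
    then show "\<exists>c\<in>{\<gamma>. \<alpha> < \<gamma>}. \<beta> < c"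
      by blast
  next
    fix \<delta> :: 'a
    assume "\<delta> \<in> Lim" and below: "\<forall>\<alpha>'<\<delta>. \<exists>c\<in>{\<gamma>. \<alpha> < \<gamma>}. \<alpha>' < c \<and> c < \<delta>"
    then obtain \<alpha>' where "\<alpha>' < \<delta>"
      unfolding Lim_def by blast
    then obtain c where "\<alpha> < c" "c < \<delta>"
      using below by blast
    then show "\<delta> \<in> {\<gamma>. \<alpha> < \<gamma>}"
      by simp
  qed
  then have "\<forall>\<alpha>. \<exists>\<xi>\<in>S. \<alpha> < \<xi>"
    using assms(2) unfolding stationary_def by blast
  then show ?thesis
    using omega1_like_uncountable_iff_unbounded[OF o1] by blast
qed

lemma clubsuit_seq_stationary:
  assumes "clubsuit_seq C" "uncountable S"
  shows "stationary {\<delta>\<in>Lim. C \<delta> \<subseteq> S}"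
proof -
  have "\<forall>S. uncountable S \<longrightarrow> stationary {\<delta>\<in>Lim. C \<delta> \<subseteq> S}"
    using assms(1) unfolding clubsuit_seq_def by (rule conjunct2)
  then show ?thesis
    using assms(2) by blast
qed

lemma clubsuit_uncountable_catches:
  assumes o1: "omega1_like TYPE('a::wellorder)" and clubsuit: "clubsuit_seq (C::'a \<Rightarrow> 'a set)"
    and "uncountable X"
  shows "uncountable {\<delta>\<in>LimN C j. CN C j \<delta> \<subseteq> X}"
proof (induction j)
  case 0
  have "uncountable {\<delta>\<in>Lim. C \<delta> \<subseteq> X}"
    using clubsuit_seq_stationary[OF clubsuit \<open>uncountable X\<close>] by (rule stationary_imp_uncountable[OF o1])
  then show ?case
    by simp
next
  case (Suc j)
  have uncountable: "uncountable {\<delta>\<in>Lim. C \<delta> \<subseteq> {\<delta>\<in>LimN C j. CN C j \<delta> \<subseteq> X}}"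
    using clubsuit_seq_stationary[OF clubsuit Suc.IH] by (rule stationary_imp_uncountable[OF o1])
  have subset: "{\<delta>\<in>Lim. C \<delta> \<subseteq> {\<delta>\<in>LimN C j. CN C j \<delta> \<subseteq> X}} \<subseteq> {\<delta>\<in>LimN C (Suc j). CN C (Suc j) \<delta> \<subseteq> X}"
  proof
    fix \<delta> assume "\<delta> \<in> {\<delta>\<in>Lim. C \<delta> \<subseteq> {\<delta>\<in>LimN C j. CN C j \<delta> \<subseteq> X}}"
    then have "\<delta> \<in> Lim" "C \<delta> \<subseteq> LimN C j" "\<And>\<xi>. \<xi> \<in> C \<delta> \<Longrightarrow> CN C j \<xi> \<subseteq> X"
      by blast+
    then show "\<delta> \<in> {\<delta>\<in>LimN C (Suc j). CN C (Suc j) \<delta> \<subseteq> X}"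
      by (simp add: UN_subset_iff)
  qed
  show ?case
    using countable_subset[OF subset] uncountable by blast
qed

lemma canon_piecesE:
  assumes "canon_pieces F m nn r l G RG Gs"
  obtains k where "l = Suc k" "G \<in> level F m l" "\<And>i. i < nn l \<Longrightarrow> Gs i \<in> level F m k"
    "G = (\<Union>i<nn l. Gs i)" "\<And>i j. i < nn l \<Longrightarrow> j < nn l \<Longrightarrow> i \<noteq> j \<Longrightarrow> Gs i \<inter> Gs j = RG"
  using assms unfolding canon_pieces_def by blast

lemma canon_pieces_piece_subset:
  "canon_pieces F m nn r l G RG Gs \<Longrightarrow> i < nn l \<Longrightarrow> Gs i \<subseteq> G"
  by (elim canon_piecesE) blast

lemma closure_k_subset_atMost: "closure_k F m \<xi> k \<subseteq> {..\<xi>}"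
  unfolding closure_k_def by auto

context
  fixes F :: "'a::linorder set set" and m nn r :: "nat \<Rightarrow> nat"
  assumes scheme: "construction_scheme F m nn r"
begin

lemma level_finite: "G \<in> level F m k \<Longrightarrow> finite G \<and> G \<noteq> {} \<and> card G = m k"
  using scheme unfolding construction_scheme_def level_def by auto

lemma level_cofinal: "finite A \<Longrightarrow> \<exists>k. \<exists>H\<in>level F m k. A \<subseteq> H"
  using scheme unfolding construction_scheme_def level_def by blast

lemma level_coherent:
  assumes "E \<in> level F m k" "G \<in> level F m k" "x \<in> E" "x \<in> G" "y \<in> E" "y < x"
  shows "y \<in> G"
proof -
  have "init_seg (E \<inter> G) E"
    using scheme assms(1,2) unfolding construction_scheme_def by blast
  then show ?thesis
    using assms(3-6) unfolding init_seg_def by blast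
qed

lemma strict_mono_m: "strict_mono m"
proof (rule strict_mono_Suc_iff[THEN iffD2], intro allI)
  fix k
  have "nn (Suc k) \<ge> 2" "r (Suc k) < m k" "m (Suc k) = r (Suc k) + (m k - r (Suc k)) * nn (Suc k)"
    using scheme unfolding construction_scheme_def is_type_def by auto
  moreover have "(m k - r (Suc k)) * 2 \<le> (m k - r (Suc k)) * nn (Suc k)"
    using calculation(1) by simp
  ultimately show "m k < m (Suc k)"
    by linarith
qed

lemma canon_pieces_root_subset:
  assumes "canon_pieces F m nn r l G RG Gs"
  shows "RG \<subseteq> G"
proof -
  obtain k where "l = Suc k" and disjoint: "\<forall>i<nn l. \<forall>j<nn l. i \<noteq> j \<longrightarrow> Gs i \<inter> Gs j = RG"
    using assms unfolding canon_pieces_def by blast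
  then have "nn l \<ge> 2"
    using scheme unfolding construction_scheme_def is_type_def by auto
  then have "Gs 0 \<inter> Gs 1 = RG"
    using disjoint by simp
  moreover have "Gs 0 \<subseteq> G"
    using canon_pieces_piece_subset[OF assms] \<open>nn l \<ge> 2\<close> by simp
  ultimately show ?thesis
    by blast
qed

lemma level_descend:
  "H \<in> level F m b \<Longrightarrow> a \<le> b \<Longrightarrow> x \<in> H \<Longrightarrow> \<exists>Q\<in>level F m a. x \<in> Q \<and> Q \<subseteq> H"
proof (induction b arbitrary: H)
  case 0
  then show ?case
    by auto
next
  case (Suc b)
  show ?case
  proof (cases "a = Suc b")
    case False
    obtain R Gs where "canon_pieces F m nn r (Suc b) H R Gs"
      using scheme Suc.prems(1) unfolding construction_scheme_def by blast
    then obtain i where "Gs i \<in> level F m b" "x \<in> Gs i" "Gs i \<subseteq> H"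
      using Suc.prems(3) unfolding canon_pieces_def by blast
    then show ?thesis
      using Suc.IH False Suc.prems(2) by (metis le_Suc_eq order.trans)
  qed (use Suc.prems in auto)
qed

lemma level_subset_of_Max_mem:
  assumes E: "E \<in> level F m j" and Q: "Q \<in> level F m k" "j \<le> k" "Max E \<in> Q"
  shows "E \<subseteq> Q"
proof -
  obtain Q' where Q': "Q' \<in> level F m j" "Max E \<in> Q'" "Q' \<subseteq> Q"
    using level_descend[OF Q] by blast
  have "finite E" "E \<noteq> {}"
    using level_finite[OF E] by auto
  then have "Max E \<in> E"
    by simp
  have "y \<in> Q'" if "y \<in> E" for y
  proof (cases "y = Max E")
    case False
    then have "y < Max E"
      using Max_ge[OF \<open>finite E\<close> that] by simp
    then show ?thesis
      using level_coherent[OF E Q'(1) \<open>Max E \<in> E\<close> Q'(2) that] by simp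
  qed (use Q'(2) in simp)
  then show ?thesis
    using Q'(3) by blast
qed

lemma level_lift:
  assumes E: "E \<in> level F m j" and G: "G \<in> level F m k" and "j \<le> k"
  obtains Q where "Q \<in> level F m k" "E \<subseteq> Q"
proof -
  have "finite (E \<union> G)"
    using level_finite E G by blast
  then obtain h H where H: "H \<in> level F m h" "E \<union> G \<subseteq> H"
    using level_cofinal by blast
  have "m k \<le> m h"
    using card_mono[of H G] H level_finite[OF G] level_finite[OF H(1)] by simp
  then have "k \<le> h"
    using strict_mono_m by (simp add: strict_mono_less_eq)
  moreover have "Max E \<in> E"
    using level_finite[OF E] by simp
  then have "Max E \<in> H"
    using H(2) by blast
  ultimately obtain Q where "Q \<in> level F m k" "Max E \<in> Q"
    using level_descend[OF H(1) \<open>k \<le> h\<close> \<open>Max E \<in> H\<close>] by blast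
  then show thesis
    using level_subset_of_Max_mem[OF E _ \<open>j \<le> k\<close>] that by blast
qed

lemma canon_pieces_separate:
  assumes cp: "canon_pieces F m nn r l G RG Gs" and ij: "i < nn l" "j < nn l" "i \<noteq> j"
    and x: "x \<in> Gs i - RG" and y: "y \<in> Gs j - RG" and "x < y"
    and E: "E \<in> level F m l'" "l' < l"
  shows "\<not> {x, y} \<subseteq> E"
proof (rule notI)
  assume "{x, y} \<subseteq> E"
  obtain k where k: "l = Suc k" "Gs j \<in> level F m k" "Gs i \<inter> Gs j = RG"
    by (rule canon_piecesE[OF cp]) (use ij in blast)
  obtain Q where Q: "Q \<in> level F m k" "E \<subseteq> Q"
    using level_lift[OF E(1) k(2)] E(2) k(1) by auto
  have "x \<in> Gs j"
    using level_coherent[OF Q(1) k(2)] Q(2) \<open>{x, y} \<subseteq> E\<close> y \<open>x < y\<close> by blast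
  then show False
    using x k(3) by blast
qed

lemma rho_canon_pieces:
  assumes cp: "canon_pieces F m nn r l G RG Gs" and ij: "i < nn l" "j < nn l" "i \<noteq> j"
    and x: "x \<in> Gs i - RG" and y: "y \<in> Gs j - RG"
  shows "rho F m x y = l"
proof -
  obtain k where "G \<in> level F m l" "Gs i \<inter> Gs j = RG"
    by (rule canon_piecesE[OF cp]) (use ij in blast)
  then have "\<exists>E\<in>level F m l. {x, y} \<subseteq> E" "x \<noteq> y"
    using canon_pieces_piece_subset[OF cp] ij x y by blast+
  moreover have "l \<le> l'" if lower: "\<exists>E\<in>level F m l'. {x, y} \<subseteq> E" for l'
  proof (rule ccontr)
    assume "\<not> l \<le> l'"
    then obtain E where "E \<in> level F m l'" "l' < l" "{x, y} \<subseteq> E"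
      using lower by auto
    then show False
      using canon_pieces_separate[OF cp ij x y] canon_pieces_separate[OF cp ij(2,1) ij(3)[symmetric] y x]
        \<open>x \<noteq> y\<close> by (metis insert_commute linorder_neqE)
  qed
  ultimately show ?thesis
    unfolding rho_def by (intro Least_equality) auto
qed

lemma finite_closure_k: "finite (closure_k F m \<xi> k)"
proof -
  have finite_level: "finite {\<zeta>. \<zeta> \<le> \<xi> \<and> (\<exists>E\<in>level F m j. {\<zeta>, \<xi>} \<subseteq> E)}" for j
  proof (cases "\<exists>E\<in>level F m j. \<xi> \<in> E")
    case True
    then obtain E0 where E0: "E0 \<in> level F m j" "\<xi> \<in> E0"
      by blast
    have "{\<zeta>. \<zeta> \<le> \<xi> \<and> (\<exists>E\<in>level F m j. {\<zeta>, \<xi>} \<subseteq> E)} \<subseteq> E0"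
      using level_coherent[OF _ E0(1) _ E0(2)] E0(2) by (auto simp: le_less)
    then show ?thesis
      using level_finite[OF E0(1)] finite_subset by blast
  next
    case False
    then have "{\<zeta>. \<zeta> \<le> \<xi> \<and> (\<exists>E\<in>level F m j. {\<zeta>, \<xi>} \<subseteq> E)} = {}"
      by blast
    then show ?thesis
      by (simp only: finite.emptyI)
  qed
  have "closure_k F m \<xi> k \<subseteq> (\<Union>j\<le>k. {\<zeta>. \<zeta> \<le> \<xi> \<and> (\<exists>E\<in>level F m j. {\<zeta>, \<xi>} \<subseteq> E)})"
  proof
    fix \<zeta> assume "\<zeta> \<in> closure_k F m \<xi> k"
    moreover have "\<exists>k. \<exists>E\<in>level F m k. {\<zeta>, \<xi>} \<subseteq> E"
      using level_cofinal[of "{\<zeta>, \<xi>}"] by simp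
    then have "\<exists>E\<in>level F m (rho F m \<zeta> \<xi>). {\<zeta>, \<xi>} \<subseteq> E"
      unfolding rho_def by (rule LeastI_ex)
    ultimately show "\<zeta> \<in> (\<Union>j\<le>k. {\<zeta>. \<zeta> \<le> \<xi> \<and> (\<exists>E\<in>level F m j. {\<zeta>, \<xi>} \<subseteq> E)})"
      unfolding closure_k_def by blast
  qed
  then show ?thesis
    using finite_level by (meson finite_UN_I finite_atMost finite_subset)
qed

end

lemma rho_captured_of_canon_pieces:
  assumes scheme: "construction_scheme F m nn r"
    and cp: "canon_pieces F m nn r l G RG Gs" and "N \<le> nn l"
    and Ds: "rtt_seq Ds N R" and "R \<subseteq> RG" and tails: "\<And>i. i < N \<Longrightarrow> Ds i - R \<subseteq> Gs i - RG"
  shows "rho_captured F m nn r Ds N l"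
proof -
  have "1 \<le> l"
    using cp by (elim canon_piecesE) simp
  have init: "finite (Ds i) \<and> init_seg R (Ds i) \<and> card (Ds i) = card (Ds 0)" if "i < N" for i
  proof -
    define j where "j = (if i = 0 then 1 else 0 :: nat)"
    have "j < N" "i \<noteq> j"
      using rtt_seqD(4)[OF Ds that] unfolding j_def by auto
    then have "R \<subseteq> Ds i"
      using rtt_seqD(5)[OF Ds that] by blast
    then show ?thesis
      using rtt_seqD(1-3)[OF Ds that] init_seg_iff_set_less by blast
  qed
  have elem_cases: "elem (Ds i) a \<in> Ds i \<and> (elem (Ds i) a \<in> R \<longleftrightarrow> a < card R)"
    if "i < N" "a < card (Ds 0)" for i a
  proof -
    have "finite (Ds i)" "init_seg R (Ds i)" "a < card (Ds i)"
      using init[OF that(1)] that(2) by auto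
    then show ?thesis
      by (simp add: elem_mem elem_mem_init_seg_iff)
  qed
  have root: "Xi F m nn r x l (-1)" if "x \<in> R" for x
    using that \<open>R \<subseteq> RG\<close> canon_pieces_root_subset[OF scheme cp] cp unfolding Xi_def by blast
  have tail: "elem (Ds i) a \<in> Gs i - RG" if "i < N" "card R \<le> a" "a < card (Ds 0)" for i a
    using elem_cases[OF that(1,3)] tails[OF that(1)] that(2) by auto
  have "Xi F m nn r x l (int i)" if "i < N" "x \<in> Gs i - RG" for i x
    using that cp canon_pieces_piece_subset[OF cp, of i] \<open>N \<le> nn l\<close> unfolding Xi_def by force
  then have "\<forall>i<N. \<forall>a<card (Ds 0). (a < card R \<longrightarrow> Xi F m nn r (elem (Ds i) a) l (-1)) \<and>
      (a \<ge> card R \<longrightarrow> Xi F m nn r (elem (Ds i) a) l (int i))"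
    using root elem_cases tail by auto
  moreover have "\<forall>i j a. i < j \<and> j < N \<and> card R \<le> a \<and> a < card (Ds 0) \<longrightarrow>
      rho F m (elem (Ds i) a) (elem (Ds j) a) = l"
    using rho_canon_pieces[OF scheme cp] tail \<open>N \<le> nn l\<close> by (metis less_le_trans less_trans nat_neq_iff)
  ultimately show ?thesis
    unfolding rho_captured_def using \<open>1 \<le> l\<close> \<open>N \<le> nn l\<close> Ds by blast
qed

lemma uncountable_family_indexed_by_Max:
  fixes S :: "'a::wellorder set set"
  assumes o1: "omega1_like TYPE('a)" and S: "uncountable S" "\<forall>s\<in>S. finite s \<and> s \<noteq> {}"
  obtains X s where "uncountable X" "\<And>\<xi>. \<xi> \<in> X \<Longrightarrow> s \<xi> \<in> S \<and> finite (s \<xi>) \<and> \<xi> \<in> s \<xi> \<and> s \<xi> \<subseteq> {..\<xi>}"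
proof -
  have "S \<subseteq> (\<Union>\<xi>\<in>Max ` S. {t. finite t \<and> t \<subseteq> {..\<xi>}})"
    using S(2) by auto
  moreover have "countable (\<Union>\<xi>\<in>Max ` S. {t. finite t \<and> t \<subseteq> {..\<xi>}})" if "countable (Max ` S)"
    using that omega1_like_countable_atMost[OF o1]
    by (intro countable_UN countable_Collect_finite_subset) auto
  ultimately have "uncountable (Max ` S)"
    using S(1) countable_subset by blast
  moreover have "inv_into S Max \<xi> \<in> S \<and> finite (inv_into S Max \<xi>) \<and> \<xi> \<in> inv_into S Max \<xi>
      \<and> inv_into S Max \<xi> \<subseteq> {..\<xi>}" if "\<xi> \<in> Max ` S" for \<xi>
  proof -
    have "inv_into S Max \<xi> \<in> S" "Max (inv_into S Max \<xi>) = \<xi>"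
      using that by (simp_all add: inv_into_into f_inv_into_f)
    then show ?thesis
      using S(2) Max_in[of "inv_into S Max \<xi>"] Max_ge[of "inv_into S Max \<xi>"] by auto
  qed
  ultimately show thesis
    by (rule that)
qed

lemma uncountable_uniform_closure_level:
  assumes Y: "uncountable Y" and s: "\<And>\<xi>. \<xi> \<in> Y \<Longrightarrow> finite (s \<xi>) \<and> s \<xi> \<subseteq> {..\<xi>}"
  obtains k Y' where "Y' \<subseteq> Y" "uncountable Y'" "\<And>\<xi>. \<xi> \<in> Y' \<Longrightarrow> s \<xi> \<subseteq> closure_k F m \<xi> k"
proof -
  define height where "height \<xi> = Max ((\<lambda>x. rho F m x \<xi>) ` s \<xi>)" for \<xi>
  obtain k where "k \<in> UNIV" and k: "uncountable {\<xi>\<in>Y. height \<xi> = k}"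
    by (rule uncountable_fiber[OF Y _ subset_UNIV, where f=height]) simp
  have closure: "s \<xi> \<subseteq> closure_k F m \<xi> k" if "\<xi> \<in> {\<xi>\<in>Y. height \<xi> = k}" for \<xi>
  proof
    fix z assume "z \<in> s \<xi>"
    then have "rho F m z \<xi> \<le> height \<xi>" "z \<le> \<xi>"
      using s that unfolding height_def by auto
    then show "z \<in> closure_k F m \<xi> k"
      using that unfolding closure_k_def by simp
  qed
  have "{\<xi>\<in>Y. height \<xi> = k} \<subseteq> Y"
    by blast
  then show thesis
    using k closure by (rule that)
qed

lemma uncountable_nested_indexed_delta_systems:
  fixes s T :: "'a::wellorder \<Rightarrow> 'a set"
  assumes o1: "omega1_like TYPE('a)" and Y: "uncountable Y"
    and s: "\<And>\<xi>. \<xi> \<in> Y \<Longrightarrow> finite (s \<xi>) \<and> \<xi> \<in> s \<xi> \<and> s \<xi> \<subseteq> {..\<xi>}"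
    and T: "\<And>\<xi>. \<xi> \<in> Y \<Longrightarrow> finite (T \<xi>) \<and> s \<xi> \<subseteq> T \<xi> \<and> T \<xi> \<subseteq> {..\<xi>}"
  obtains X R R' where "X \<subseteq> Y" "uncountable X" "indexed_delta_system X s R"
    "indexed_delta_system X T R'" "R \<subseteq> R'" "\<forall>\<xi>\<in>X. s \<xi> - R \<subseteq> T \<xi> - R'"
proof -
  obtain X\<^sub>1 R where X\<^sub>1: "X\<^sub>1 \<subseteq> Y" "uncountable X\<^sub>1" "indexed_delta_system X\<^sub>1 s R"
    using uncountable_indexed_delta_system[OF o1 Y s] .
  have "finite (T \<xi>) \<and> \<xi> \<in> T \<xi> \<and> T \<xi> \<subseteq> {..\<xi>}" if "\<xi> \<in> X\<^sub>1" for \<xi>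
  proof -
    have "\<xi> \<in> Y"
      using that X\<^sub>1(1) by blast
    then show ?thesis
      using s[of \<xi>] T[of \<xi>] by blast
  qed
  then obtain X\<^sub>2 R' where X\<^sub>2: "X\<^sub>2 \<subseteq> X\<^sub>1" "uncountable X\<^sub>2" "indexed_delta_system X\<^sub>2 T R'"
    using uncountable_indexed_delta_system[OF o1 X\<^sub>1(2)] by blast
  have s_system: "indexed_delta_system X\<^sub>2 s R"
    using indexed_delta_system_subset[OF X\<^sub>1(3) X\<^sub>2(1)] .
  obtain \<xi>\<^sub>0 where "\<xi>\<^sub>0 \<in> X\<^sub>2"
    using X\<^sub>2(2) by (metis countable_empty ex_in_conv)
  define X where "X = {\<xi>\<in>X\<^sub>2. \<xi>\<^sub>0 < \<xi>}"
  have "uncountable X"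
    unfolding X_def by (rule uncountable_greaterThan[OF o1 X\<^sub>2(2)])
  have "X \<subseteq> X\<^sub>2"
    unfolding X_def by blast
  have "s \<xi> \<subseteq> T \<xi>" if "\<xi> \<in> X\<^sub>2" for \<xi>
    using T that X\<^sub>1(1) X\<^sub>2(1) by blast
  then have refine: "R \<subseteq> R'" "s \<xi> - R \<subseteq> T \<xi> - R'" if "\<xi> \<in> X" for \<xi>
    using indexed_delta_system_refine[OF s_system X\<^sub>2(3) _ \<open>\<xi>\<^sub>0 \<in> X\<^sub>2\<close>, of \<xi>] that
    unfolding X_def by auto
  obtain \<xi> where "\<xi> \<in> X"
    using \<open>uncountable X\<close> by (metis countable_empty ex_in_conv)
  show thesis
  proof (rule that)
    show "X \<subseteq> Y"
      using \<open>X \<subseteq> X\<^sub>2\<close> X\<^sub>1(1) X\<^sub>2(1) by blast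
    show "indexed_delta_system X s R"
      using indexed_delta_system_subset[OF s_system \<open>X \<subseteq> X\<^sub>2\<close>] .
    show "indexed_delta_system X T R'"
      using indexed_delta_system_subset[OF X\<^sub>2(3) \<open>X \<subseteq> X\<^sub>2\<close>] .
    show "R \<subseteq> R'"
      using refine(1)[OF \<open>\<xi> \<in> X\<close>] .
  qed (use \<open>uncountable X\<close> refine(2) in blast)+
qed

lemma uncountable_family_uniformization:
  fixes S :: "'a::wellorder set set"
  assumes o1: "omega1_like TYPE('a)" and scheme: "construction_scheme F m nn r"
    and S: "uncountable S" "\<forall>s\<in>S. finite s \<and> s \<noteq> {}"
  obtains X s k R R' where "uncountable X" "s ` X \<subseteq> S" "indexed_delta_system X s R"
    "indexed_delta_system X (\<lambda>\<xi>. closure_k F m \<xi> k) R'" "R \<subseteq> R'"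
    "\<And>\<xi>. \<xi> \<in> X \<Longrightarrow> s \<xi> - R \<subseteq> closure_k F m \<xi> k - R'"
proof -
  obtain X\<^sub>0 s where X\<^sub>0: "uncountable X\<^sub>0"
      "\<And>\<xi>. \<xi> \<in> X\<^sub>0 \<Longrightarrow> s \<xi> \<in> S \<and> finite (s \<xi>) \<and> \<xi> \<in> s \<xi> \<and> s \<xi> \<subseteq> {..\<xi>}"
    by (rule uncountable_family_indexed_by_Max[OF o1 S]) blast
  obtain k X\<^sub>1 where X\<^sub>1: "X\<^sub>1 \<subseteq> X\<^sub>0" "uncountable X\<^sub>1" "\<And>\<xi>. \<xi> \<in> X\<^sub>1 \<Longrightarrow> s \<xi> \<subseteq> closure_k F m \<xi> k"
    by (rule uncountable_uniform_closure_level[OF X\<^sub>0(1), where s=s]) (use X\<^sub>0(2) in blast)+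
  have members: "finite (s \<xi>) \<and> \<xi> \<in> s \<xi> \<and> s \<xi> \<subseteq> {..\<xi>}" if "\<xi> \<in> X\<^sub>1" for \<xi>
    using X\<^sub>0(2) X\<^sub>1(1) that by blast
  have closure: "finite (closure_k F m \<xi> k) \<and> s \<xi> \<subseteq> closure_k F m \<xi> k \<and> closure_k F m \<xi> k \<subseteq> {..\<xi>}"
    if "\<xi> \<in> X\<^sub>1" for \<xi>
    using finite_closure_k[OF scheme] X\<^sub>1(3)[OF that] closure_k_subset_atMost by blast
  obtain X R R' where X: "X \<subseteq> X\<^sub>1" "uncountable X" "indexed_delta_system X s R"
      "indexed_delta_system X (\<lambda>\<xi>. closure_k F m \<xi> k) R'" "R \<subseteq> R'"
      "\<forall>\<xi>\<in>X. s \<xi> - R \<subseteq> closure_k F m \<xi> k - R'"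
    using uncountable_nested_indexed_delta_systems[OF o1 X\<^sub>1(2) members closure] .
  have "s ` X \<subseteq> S"
    using X(1) X\<^sub>1(1) X\<^sub>0(2) by blast
  then show thesis
    by (rule that[OF X(2) _ X(3-5)]) (use X(6) in blast)
qed

lemma strict_mono_on_elem_snoc:
  assumes "finite D" "card D = n" "\<forall>\<xi>\<in>D. \<xi> < \<beta>"
  shows "strict_mono_on {..<n + 1} (\<lambda>i. if i < n then elem D i else \<beta>)"
proof (rule strict_mono_onI)
  fix i j assume "i \<in> {..<n + 1}" "j \<in> {..<n + 1}" "i < j"
  moreover have "elem D i \<in> D" if "i < n" for i
    using elem_mem[OF assms(1)] assms(2) that by simp
  ultimately show "(if i < n then elem D i else \<beta>) < (if j < n then elem D j else \<beta>)"
    using strict_mono_onD[OF elem_strict_mono[OF assms(1)]] assms(2,3) by auto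
qed

lemma rho_captured_of_IH_witness:
  assumes scheme: "construction_scheme F m nn r" and "1 \<le> n"
    and "s ` X \<subseteq> S" and sys: "indexed_delta_system X s R" and "R \<subseteq> R'"
    and tails: "\<And>\<xi>. \<xi> \<in> X \<Longrightarrow> s \<xi> - R \<subseteq> T \<xi> - R'"
    and cp: "canon_pieces F m nn r l G RG Gs" and "n < nn l"
    and D: "D \<subseteq> X" "finite D" "card D = n"
    and \<beta>: "\<beta> \<in> X" "\<forall>\<xi>\<in>D. \<xi> < \<beta>" "s \<beta> - R \<subseteq> Gs n - RG"
    and pieces: "\<forall>i<n. T (elem D i) \<subseteq> Gs i \<and> T (elem D i) \<inter> RG = R'"
  shows "\<exists>Ds. (\<forall>i<n + 1. Ds i \<in> S) \<and> inj_on Ds {..<n + 1} \<and> rho_captured F m nn r Ds (n + 1) l"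
proof -
  define idx where "idx i = (if i < n then elem D i else \<beta>)" for i
  have elem_D: "elem D i \<in> X" if "i < n" for i
    using elem_mem[OF D(2)] D(1,3) that by auto
  have idx_X: "idx ` {..<n + 1} \<subseteq> X"
    using elem_D \<beta>(1) unfolding idx_def by auto
  have rtt: "rtt_seq (\<lambda>i. s (idx i)) (n + 1) R" and inj: "inj_on (\<lambda>i. s (idx i)) {..<n + 1}"
    using indexed_delta_system_rtt_seq[OF sys strict_mono_on_elem_snoc[OF D(2,3) \<beta>(2)] idx_X[unfolded idx_def]]
      \<open>1 \<le> n\<close> unfolding idx_def by auto
  have "T (elem D 0) \<inter> RG = R'"
    using pieces \<open>1 \<le> n\<close> by simp
  then have "R \<subseteq> RG"
    using \<open>R \<subseteq> R'\<close> by blast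
  moreover have "s (idx i) - R \<subseteq> Gs i - RG" if "i < n + 1" for i
  proof (cases "i < n")
    case True
    then have "T (elem D i) \<subseteq> Gs i" "T (elem D i) \<inter> RG = R'"
      using pieces by auto
    then show ?thesis
      using tails[OF elem_D[OF True]] True unfolding idx_def by auto
  next
    case False
    then show ?thesis
      using that \<beta>(3) unfolding idx_def by (simp add: less_Suc_eq)
  qed
  ultimately have "rho_captured F m nn r (\<lambda>i. s (idx i)) (n + 1) l"
    using rho_captured_of_canon_pieces[OF scheme cp _ rtt] \<open>n < nn l\<close> by simp
  moreover have "\<forall>i<n + 1. s (idx i) \<in> S"
    using idx_X \<open>s ` X \<subseteq> S\<close> by auto
  ultimately show ?thesis
    using inj by (intro exI[where x="\<lambda>i. s (idx i)"]) blast
qed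

lemma IH_witnessed_levels_rho_captured:
  assumes scheme: "construction_scheme F m nn r" and "1 \<le> n"
    and "s ` X \<subseteq> S" and sys: "indexed_delta_system X s R" and "R \<subseteq> R'"
    and tails: "\<And>\<xi>. \<xi> \<in> X \<Longrightarrow> s \<xi> - R \<subseteq> T \<xi> - R'"
    and "K \<subseteq> X" "\<beta> \<in> X" "\<forall>\<xi>\<in>K. \<xi> < \<beta>"
  shows "{l. k \<le> l \<and> n < nn l \<and> (\<exists>G RG Gs D. canon_pieces F m nn r l G RG Gs \<and>
            D \<subseteq> K \<and> finite D \<and> card D = n \<and> s \<beta> - R \<subseteq> Gs n - RG \<and>
            (\<forall>i<n. T (elem D i) \<subseteq> Gs i \<and> T (elem D i) \<inter> RG = R'))}
    \<subseteq> {l. \<exists>Ds. (\<forall>i<n + 1. Ds i \<in> S) \<and> inj_on Ds {..<n + 1} \<and> rho_captured F m nn r Ds (n + 1) l}"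
proof
  fix l assume "l \<in> {l. k \<le> l \<and> n < nn l \<and> (\<exists>G RG Gs D. canon_pieces F m nn r l G RG Gs \<and>
            D \<subseteq> K \<and> finite D \<and> card D = n \<and> s \<beta> - R \<subseteq> Gs n - RG \<and>
            (\<forall>i<n. T (elem D i) \<subseteq> Gs i \<and> T (elem D i) \<inter> RG = R'))}"
  then obtain G RG Gs D where witness: "canon_pieces F m nn r l G RG Gs" "n < nn l"
      "D \<subseteq> K" "finite D" "card D = n" "s \<beta> - R \<subseteq> Gs n - RG"
      "\<forall>i<n. T (elem D i) \<subseteq> Gs i \<and> T (elem D i) \<inter> RG = R'"
    by blast
  have "D \<subseteq> X" "\<forall>\<xi>\<in>D. \<xi> < \<beta>"
    using witness(3) assms(7,9) by blast+
  then show "l \<in> {l. \<exists>Ds. (\<forall>i<n + 1. Ds i \<in> S) \<and> inj_on Ds {..<n + 1} \<and> rho_captured F m nn r Ds (n + 1) l}"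
    using rho_captured_of_IH_witness[OF scheme assms(2-6) witness(1,2) _ witness(4,5) assms(8) _ witness(6,7)]
    by blast
qed

lemma infinite_rho_captured_levels:
  fixes C :: "'a::wellorder \<Rightarrow> 'a set"
  assumes o1: "omega1_like TYPE('a)" and clubsuit: "clubsuit_seq C" and "1 \<le> n"
    and scheme: "construction_scheme F m nn r" and IH: "IH_rho C F m nn r n"
    and S: "uncountable S" "\<forall>s\<in>S. finite s \<and> s \<noteq> {}"
  shows "infinite {l. \<exists>Ds. (\<forall>i<n + 1. Ds i \<in> S) \<and> inj_on Ds {..<n + 1} \<and> rho_captured F m nn r Ds (n + 1) l}"
proof -
  obtain X s k R R' where X: "uncountable X" "s ` X \<subseteq> S" "indexed_delta_system X s R"
      "indexed_delta_system X (\<lambda>\<xi>. closure_k F m \<xi> k) R'" "R \<subseteq> R'"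
      "\<And>\<xi>. \<xi> \<in> X \<Longrightarrow> s \<xi> - R \<subseteq> closure_k F m \<xi> k - R'"
    by (rule uncountable_family_uniformization[OF o1 scheme S]) blast
  have "{\<delta>\<in>LimN C n. CN C n \<delta> \<subseteq> X} \<noteq> {}"
    using clubsuit_uncountable_catches[OF o1 clubsuit X(1), of n] by (metis countable_empty)
  then obtain \<delta> where \<delta>: "\<delta> \<in> LimN C n" "CN C n \<delta> \<subseteq> X"
    by blast
  have "\<forall>\<alpha>. \<exists>\<xi>\<in>X. \<alpha> < \<xi>"
    using omega1_like_uncountable_iff_unbounded[OF o1, of X] X(1) by simp
  then obtain \<beta> where \<beta>: "\<beta> \<in> X" "\<delta> < \<beta>" "\<forall>z\<in>s \<beta> - R. \<delta> < z"
    by (rule indexed_delta_system_tail_above[OF X(3)])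
  have rtt: "rtt_family ((\<lambda>\<xi>. closure_k F m \<xi> k) ` CN C n \<delta>) R'"
    using indexed_delta_system_rtt_family[OF X(4) \<delta>(2) CN_infinite[OF clubsuit \<delta>(1)]] .
  have "good_tuple C F m n \<delta> k (s \<beta> - R)"
    using \<delta>(1) rtt \<beta>(3) indexed_delta_systemD[OF X(3) \<beta>(1)]
    unfolding good_tuple_def init_seg_def by (auto simp: less_imp_le)
  note witnessed = IH[unfolded IH_rho_def, rule_format, OF conjI[OF this rtt]]
  have "\<forall>\<xi>\<in>CN C n \<delta>. \<xi> < \<beta>"
    using CN_subset_lessThan[OF clubsuit \<delta>(1)] \<beta>(2) by (meson lessThan_iff less_trans subsetD)
  then show ?thesis
    using infinite_super[OF IH_witnessed_levels_rho_captured[OF scheme \<open>1 \<le> n\<close> X(2,3,5,6) \<delta>(2) \<beta>(1)] witnessed]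
    by blast
qed

theorem mainTheorem18:
  fixes C :: "'a::wellorder \<Rightarrow> 'a set"
    and F :: "'a set set"
    and m nn r :: "nat \<Rightarrow> nat"
    and n :: nat
  assumes "omega1_like TYPE('a)"
    and "clubsuit_seq C"
    and "n \<ge> 1"
    and "construction_scheme F m nn r"
    and "good_type m nn r"
    and "IH_rho C F m nn r n"
  shows "rho_capturing F m nn r (n + 1)"
proof -
  show ?thesis
    unfolding rho_capturing_def
    by (intro allI impI, elim conjE) (rule infinite_rho_captured_levels[OF assms(1-4,6)])
qed

end
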